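(* Let $X$ be a Minkowski plane and let $A=\{\mathbf{x}_0,\mathbf{x}_1,\dots,\mathbf{x}_{2k-1}\}\subset X$ (distinct points). Suppose that $\mathbf{x}_0\in\mathrm{FT}(A)$ and that $\mathbf{x}_0$ is a vertex of $\operatorname{conv}A$. Then $A$ is a pseudo double cluster with $\mathbf{x}_0$ as centre.
   Context: A Minkowski plane is a two-dimensional real normed space $(X,\|\cdot\|)$ with unit ball $B$. A proper exposed face of $B$ is the intersection of $B$ with a supporting line of $B$. For finite $A\subset X$, a Fermat-Torricelli (FT) point of $A$ is a minimizer of $\mathbf{x}\mapsto\sum_{\mathbf{a}\in A}\|\mathbf{x}-\mathbf{a}\|$, and $\mathrm{FT}(A)$ is the set of all FT points. A set $C=\{\mathbf{x}_1,\dots,\mathbf{x}_m,\mathbf{y}_1,\dots,\mathbf{y}_m\}$ is a double cluster with pairs $\mathbf{x}_i,\mathbf{y}_i$ if all unit vectors $\frac{\mathbf{x}_i-\mathbf{y}_i}{\|\mathbf{x}_i-\mathbf{y}_i\|}$ lie in the same proper exposed face of $B$. A set $A$ is a pseudo double cluster if $A$ is the union of a double cluster $C$, an FT point of $C$ (called the centre of the pseudo double cluster), and one further arbitrary point. *)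

theory Defs
  imports "HOL-Analysis.Analysis"
begin

definition minkowski_plane :: "'a::real_normed_vector itself \<Rightarrow> bool" where
  "minkowski_plane _ \<longleftrightarrow> dim (UNIV :: 'a set) = 2"

definition supporting_line_of_ball :: "'a::real_normed_vector set \<Rightarrow> bool" where
  "supporting_line_of_ball L \<longleftrightarrow>
     (\<exists>f c. linear (f :: 'a \<Rightarrow> real) \<and> (\<exists>v. f v \<noteq> 0) \<and> L = {x. f x = c} \<and>
        (\<forall>x\<in>cball 0 1. f x \<le> c) \<and> (\<exists>x\<in>cball 0 1. f x = c))"

definition proper_exposed_face :: "'a::real_normed_vector set \<Rightarrow> bool" where
  "proper_exposed_face F \<longleftrightarrow>
     (\<exists>L. supporting_line_of_ball L \<and> F = cball 0 1 \<inter> L)"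

definition FT :: "'a::real_normed_vector set \<Rightarrow> 'a set" where
  "FT A = {x. \<forall>z. (\<Sum>a\<in>A. norm (x - a)) \<le> (\<Sum>a\<in>A. norm (z - a))}"

definition double_cluster :: "'a::real_normed_vector set \<Rightarrow> bool" where
  "double_cluster C \<longleftrightarrow>
     (\<exists>m (xs :: nat \<Rightarrow> 'a) ys F.
        C = xs ` {..<m} \<union> ys ` {..<m} \<and> card C = 2 * m \<and>
        proper_exposed_face F \<and>
        (\<forall>i<m. (1 / norm (xs i - ys i)) *\<^sub>R (xs i - ys i) \<in> F))"

definition pseudo_double_cluster_centre :: "'a::real_normed_vector set \<Rightarrow> 'a \<Rightarrow> bool" where
  "pseudo_double_cluster_centre A c \<longleftrightarrow>
     (\<exists>C p. double_cluster C \<and> c \<in> FT C \<and> A = C \<union> {c} \<union> {p})"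

end

theory Submission
  imports Defs
begin

text \<open>Let S = A - {x0}, with 2m+1 points. Since x0 is a vertex, some linear functional
  is positive on every x - x0 (x \<in> S), so S can be enumerated as a 0, ..., a (2m) in
  angular order around x0. Pair a r with a (2m - r) and set the middle point a m apart.
  Moving x0 slightly towards a m leaves its distance sum to {x0, a m} unchanged and cannot
  increase any pair sum, because a m - x0 lies in the angle of every pair. As x0 is a
  Fermat-Torricelli point, every pair sum stays the same, which produces a functional \<psi> of
  dual norm at most 1 with \<psi> (a r - x0) = \<parallel>a r - x0\<parallel> and
  \<psi> (a (2m - r) - x0) = -\<parallel>a (2m - r) - x0\<parallel>. The angular order lets one \<psi> serve all pairs; then every direction a r - a (2m - r)
  lies in the exposed face {\<psi> = 1} of the unit ball, and x0 is a Fermat-Torricelli point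
  of the double cluster S - {a m}.\<close>

section \<open>Norming functionals on a Minkowski plane\<close>

definition norm_dominated :: "('a::real_normed_vector \<Rightarrow> real) \<Rightarrow> bool" where
  "norm_dominated \<psi> \<longleftrightarrow> linear \<psi> \<and> (\<forall>x. \<psi> x \<le> norm x)"

lemma norm_dominated_neg_le:
  assumes "norm_dominated \<psi>"
  shows "- norm x \<le> \<psi> x"
  using assms linear_neg[of \<psi> x] unfolding norm_dominated_def
  by (metis minus_le_iff norm_minus_cancel)

lemma minkowski_plane_coordinates:
  fixes u :: "'a::real_normed_vector"
  assumes "minkowski_plane TYPE('a)" and "u \<noteq> 0"
  obtains w and \<xi> \<eta> :: "'a \<Rightarrow> real"
  where "linear \<xi>" "linear \<eta>" "\<And>x. x = \<xi> x *\<^sub>R u + \<eta> x *\<^sub>R w" "\<xi> u = 1" "\<eta> u = 0"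
proof -
  obtain B where B: "{u} \<subseteq> B" "independent B" "UNIV \<subseteq> span B"
    by (rule maximal_independent_subset_extend[of "{u}" UNIV]) (use assms(2) in auto)
  have "card B = 2"
    using basis_card_eq_dim[of B UNIV] B assms(1) by (simp add: minkowski_plane_def)
  then have "card (B - {u}) = 1" using B(1) by (simp add: card_gt_0_iff)
  then obtain w where "B - {u} = {w}" by (auto simp: card_1_singleton_iff)
  then have Buw: "B = {u, w}" "w \<noteq> u" using B(1) by auto
  obtain \<xi> :: "'a \<Rightarrow> real" where \<xi>: "linear \<xi>" "\<forall>x\<in>B. \<xi> x = (if x = u then 1 else 0)"
    using linear_independent_extend[OF B(2), of "\<lambda>x. if x = u then 1 else 0"] by blast
  obtain \<eta> :: "'a \<Rightarrow> real" where \<eta>: "linear \<eta>" "\<forall>x\<in>B. \<eta> x = (if x = w then 1 else 0)"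
    using linear_independent_extend[OF B(2), of "\<lambda>x. if x = w then 1 else 0"] by blast
  have lin: "linear (\<lambda>x. \<xi> x *\<^sub>R u + \<eta> x *\<^sub>R w)"
    using \<xi>(1) \<eta>(1) by (auto simp: linear_iff scaleR_add_left scaleR_add_right)
  have "x = \<xi> x *\<^sub>R u + \<eta> x *\<^sub>R w" for x
  proof -
    have "id x = \<xi> x *\<^sub>R u + \<eta> x *\<^sub>R w"
      by (rule linear_eq_on[OF linear_id lin, of x B]) (use B(3) \<xi>(2) \<eta>(2) Buw in auto)
    then show ?thesis by simp
  qed
  moreover have "\<xi> u = 1" "\<eta> u = 0" using \<xi>(2) \<eta>(2) Buw by auto
  ultimately show thesis using that \<xi>(1) \<eta>(1) by blast
qed

text \<open>One step of the Hahn-Banach extension: the norming functional on the line through u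
  is extended by any value \<gamma> on w between the bounds \<open>below\<close> and \<open>above\<close>, which are
  compatible by the triangle inequality.\<close>

lemma norming_functional_of_coordinates:
  fixes u w :: "'a::real_normed_vector"
  assumes "linear \<xi>" "linear \<eta>" and dec: "\<And>x. x = \<xi> x *\<^sub>R u + \<eta> x *\<^sub>R w"
    and "\<xi> u = 1" "\<eta> u = 0"
  shows "\<exists>\<psi>. norm_dominated \<psi> \<and> \<psi> u = norm u"
proof -
  have bounds: "c1 * norm u - norm (c1 *\<^sub>R u - w) \<le> norm (c2 *\<^sub>R u + w) - c2 * norm u" for c1 c2
  proof -
    have "(c1 + c2) * norm u \<le> norm ((c1 + c2) *\<^sub>R u)" by (simp add: abs_ge_self mult_right_mono)
    also have "(c1 + c2) *\<^sub>R u = (c1 *\<^sub>R u - w) + (c2 *\<^sub>R u + w)" by (simp add: algebra_simps)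
    also have "norm \<dots> \<le> norm (c1 *\<^sub>R u - w) + norm (c2 *\<^sub>R u + w)" by (rule norm_triangle_ineq)
    finally show ?thesis by (simp add: algebra_simps)
  qed
  define L where "L = range (\<lambda>c. c * norm u - norm (c *\<^sub>R u - w))"
  have "bdd_above L" unfolding L_def using bounds[of _ 0] by (intro bdd_aboveI[of _ "norm w"]) auto
  define \<gamma> where "\<gamma> = Sup L"
  have below: "c * norm u - norm (c *\<^sub>R u - w) \<le> \<gamma>" for c
    unfolding \<gamma>_def using \<open>bdd_above L\<close> by (intro cSup_upper) (auto simp: L_def)
  have above: "\<gamma> \<le> norm (c *\<^sub>R u + w) - c * norm u" for c
    unfolding \<gamma>_def by (rule cSup_least) (auto simp: L_def bounds)
  define \<psi> where "\<psi> x = \<xi> x * norm u + \<eta> x * \<gamma>" for x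
  have "\<psi> x \<le> norm x" for x
  proof -
    define c s where "c = \<xi> x" and "s = \<eta> x"
    have x: "x = c *\<^sub>R u + s *\<^sub>R w" using dec[of x] by (simp add: c_def s_def)
    consider "s > 0" | "s = 0" | "s < 0" by linarith
    then have "c * norm u + s * \<gamma> \<le> norm (c *\<^sub>R u + s *\<^sub>R w)"
    proof cases
      case 1
      have "s * \<gamma> \<le> s * (norm ((c / s) *\<^sub>R u + w) - (c / s) * norm u)"
        using above[of "c / s"] 1 by (intro mult_left_mono) auto
      moreover have "norm (c *\<^sub>R u + s *\<^sub>R w) = s * norm ((c / s) *\<^sub>R u + w)"
      proof -
        have "c *\<^sub>R u + s *\<^sub>R w = s *\<^sub>R ((c / s) *\<^sub>R u + w)" using 1 by (simp add: scaleR_add_right)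
        then show ?thesis using 1 by simp
      qed
      ultimately show ?thesis using 1 by (simp add: right_diff_distrib)
    next
      case 2
      then show ?thesis by (simp add: abs_ge_self mult_right_mono)
    next
      case 3
      define r where "r = - s"
      have "0 < r" using 3 by (simp add: r_def)
      have "r * ((c / r) * norm u - norm ((c / r) *\<^sub>R u - w)) \<le> r * \<gamma>"
        using below[of "c / r"] \<open>0 < r\<close> by (intro mult_left_mono) auto
      moreover have "norm (c *\<^sub>R u + s *\<^sub>R w) = r * norm ((c / r) *\<^sub>R u - w)"
      proof -
        have "c *\<^sub>R u + s *\<^sub>R w = r *\<^sub>R ((c / r) *\<^sub>R u - w)" using \<open>0 < r\<close> by (simp add: r_def scaleR_diff_right)
        then show ?thesis using \<open>0 < r\<close> by simp
      qed
      ultimately show ?thesis using \<open>0 < r\<close> by (simp add: r_def right_diff_distrib)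
    qed
    moreover have "\<psi> x = c * norm u + s * \<gamma>" by (simp add: \<psi>_def c_def s_def)
    moreover have "norm x = norm (c *\<^sub>R u + s *\<^sub>R w)" using x by (rule arg_cong)
    ultimately show ?thesis by simp
  qed
  moreover have "linear \<psi>"
    using assms(1,2) unfolding \<psi>_def linear_iff by (simp add: distrib_right distrib_left)
  moreover have "\<psi> u = norm u" using assms(4,5) by (simp add: \<psi>_def)
  ultimately show ?thesis unfolding norm_dominated_def by blast
qed

lemma minkowski_plane_norming_functional:
  assumes "minkowski_plane TYPE('a::real_normed_vector)"
  obtains \<psi> where "norm_dominated \<psi>" "\<psi> u = norm (u::'a)"
proof (cases "u = 0")
  case True
  then show thesis using that[of "\<lambda>_. 0"] by (simp add: norm_dominated_def linear_zero)
next
  case False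
  obtain w and \<xi> \<eta> :: "'a \<Rightarrow> real" where coordinates:
    "linear \<xi>" "linear \<eta>" "\<And>x. x = \<xi> x *\<^sub>R u + \<eta> x *\<^sub>R w" "\<xi> u = 1" "\<eta> u = 0"
    using minkowski_plane_coordinates[OF assms False] by metis
  from norming_functional_of_coordinates[OF coordinates] show thesis using that by blast
qed

lemma antinorming_functional_of_norm_diff_eq:
  assumes "minkowski_plane TYPE('a::real_normed_vector)"
    and "0 < a" "0 < b" and eq: "norm (a *\<^sub>R v - b *\<^sub>R w) = a * norm v + b * norm (w::'a)"
  obtains \<psi> where "norm_dominated \<psi>" "\<psi> v = norm v" "\<psi> w = - norm w"
proof -
  obtain \<psi> where \<psi>: "norm_dominated \<psi>" "\<psi> (a *\<^sub>R v - b *\<^sub>R w) = norm (a *\<^sub>R v - b *\<^sub>R w)"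
    using minkowski_plane_norming_functional[OF assms(1)] by blast
  have "linear \<psi>" using \<psi>(1) by (simp add: norm_dominated_def)
  then have "a * (norm v - \<psi> v) + b * (norm w + \<psi> w) = 0"
    using \<psi>(2) eq by (simp add: linear_diff linear_scale algebra_simps)
  moreover have "0 \<le> a * (norm v - \<psi> v)" "0 \<le> b * (norm w + \<psi> w)"
    using \<psi>(1) norm_dominated_neg_le[OF \<psi>(1), of w] assms(2,3)
    by (simp_all add: norm_dominated_def)
  ultimately have "a * (norm v - \<psi> v) = 0" "b * (norm w + \<psi> w) = 0" by linarith+
  then show thesis using that \<psi>(1) assms(2,3) by simp
qed

lemma proper_exposed_face_of_norming:
  assumes "norm_dominated \<psi>" "\<psi> u = norm u" "u \<noteq> 0"
  shows "proper_exposed_face (cball 0 1 \<inter> {x. \<psi> x = 1})"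
  unfolding proper_exposed_face_def
proof (intro exI conjI)
  have "linear \<psi>" "\<forall>x. \<psi> x \<le> norm x" using assms(1) by (simp_all add: norm_dominated_def)
  moreover have "\<psi> (u /\<^sub>R norm u) = 1" using assms(2,3) \<open>linear \<psi>\<close> by (simp add: linear_scale)
  ultimately show "supporting_line_of_ball {x. \<psi> x = 1}"
    unfolding supporting_line_of_ball_def using assms(3)
    by (intro exI[of _ \<psi>] exI[of _ 1] conjI bexI[of _ "u /\<^sub>R norm u"] exI[of _ "u /\<^sub>R norm u"])
       (auto intro: order_trans)
qed (rule refl)

lemma antinormed_pair_norm_diff:
  assumes "norm_dominated \<psi>" "\<psi> (x - c) = norm (x - c)" "\<psi> (y - c) = - norm (y - c)"
  shows "\<psi> (x - y) = norm (x - y)" "norm (x - y) = norm (x - c) + norm (y - c)"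
proof -
  have "\<psi> (x - y) = norm (x - c) + norm (y - c)"
    using assms linear_diff[of \<psi> "x - c" "y - c"] by (simp add: norm_dominated_def)
  moreover have "norm (x - y) \<le> norm (x - c) + norm (y - c)"
    using norm_triangle_ineq4[of "x - c" "y - c"] by simp
  moreover have "\<psi> (x - y) \<le> norm (x - y)" using assms(1) by (simp add: norm_dominated_def)
  ultimately show "\<psi> (x - y) = norm (x - y)" "norm (x - y) = norm (x - c) + norm (y - c)"
    by linarith+
qed

section \<open>Angular order around a vertex\<close>

definition in_cone :: "'a::real_vector \<Rightarrow> 'a \<Rightarrow> 'a \<Rightarrow> bool" where
  "in_cone d v w \<longleftrightarrow> (\<exists>\<alpha> \<beta>. 0 \<le> \<alpha> \<and> 0 \<le> \<beta> \<and> d = \<alpha> *\<^sub>R v + \<beta> *\<^sub>R w)"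

lemma norming_of_in_cone_left:
  assumes "norm_dominated \<psi>" "\<psi> b = norm b" "\<psi> c = - norm c" "in_cone b a c" "b \<noteq> 0"
  shows "\<psi> a = norm a"
proof -
  obtain \<alpha> \<beta> where \<alpha>\<beta>: "0 \<le> \<alpha>" "0 \<le> \<beta>" "b = \<alpha> *\<^sub>R a + \<beta> *\<^sub>R c"
    using assms(4) unfolding in_cone_def by blast
  have \<psi>: "linear \<psi>" "\<psi> a \<le> norm a" using assms(1) by (simp_all add: norm_dominated_def)
  have e: "norm b + \<beta> * norm c = \<alpha> * \<psi> a"
    using assms(2,3) \<alpha>\<beta>(3) \<psi>(1) by (simp add: linear_add linear_scale)
  have "0 < \<alpha>"
    using e \<alpha>\<beta> assms(5) by (cases "\<alpha> = 0") (auto simp: add_pos_nonneg)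
  have "\<alpha> * norm a = norm (b - \<beta> *\<^sub>R c)"
    using \<alpha>\<beta> \<open>0 < \<alpha>\<close> by simp
  also have "\<dots> \<le> \<alpha> * \<psi> a"
    using norm_triangle_ineq4[of b "\<beta> *\<^sub>R c"] e \<alpha>\<beta> by simp
  finally show ?thesis using \<psi>(2) \<open>0 < \<alpha>\<close> by simp
qed

lemma antinorming_of_in_cone_right:
  assumes "norm_dominated \<psi>" "\<psi> a = norm a" "\<psi> b = - norm b" "in_cone b a c" "b \<noteq> 0"
  shows "\<psi> c = - norm c"
proof -
  have "linear \<psi>" using assms(1) by (simp add: norm_dominated_def)
  have cone: "in_cone (- b) (- c) (- a)"
    using assms(4) unfolding in_cone_def by (metis add.commute scaleR_minus_right minus_add_distrib)
  have "\<psi> (- c) = norm (- c)"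
    using norming_of_in_cone_left[OF assms(1) _ _ cone] assms(2,3,5) \<open>linear \<psi>\<close> by (simp add: linear_neg)
  then show ?thesis using \<open>linear \<psi>\<close> by (simp add: linear_neg)
qed

lemma in_cone_of_slope_order:
  fixes l h :: "'a::real_vector \<Rightarrow> real"
  assumes "linear l" "linear h" "\<And>x. l x = 0 \<Longrightarrow> h x = 0 \<Longrightarrow> x = 0"
    and pos: "0 < l a" "0 < l b" "0 < l c"
    and "h a / l a \<le> h b / l b" "h b / l b \<le> h c / l c"
  shows "in_cone b a c"
proof -
  define sa sb sc where "sa = h a / l a" and "sb = h b / l b" and "sc = h c / l c"
  have h: "h a = sa * l a" "h b = sb * l b" "h c = sc * l c"
    using pos by (simp_all add: sa_def sb_def sc_def)
  have sab: "sa \<le> sb" "sb \<le> sc" using assms(7,8) by (simp_all add: sa_def sb_def sc_def)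
  have comb: "b = \<alpha> *\<^sub>R a + \<beta> *\<^sub>R c" if "l b = \<alpha> * l a + \<beta> * l c" "h b = \<alpha> * h a + \<beta> * h c" for \<alpha> \<beta>
  proof -
    have "l (b - \<alpha> *\<^sub>R a - \<beta> *\<^sub>R c) = 0" "h (b - \<alpha> *\<^sub>R a - \<beta> *\<^sub>R c) = 0"
      using that assms(1,2) by (simp_all add: linear_diff linear_scale)
    then have "b - \<alpha> *\<^sub>R a - \<beta> *\<^sub>R c = 0" using assms(3) by blast
    then show ?thesis by (simp add: algebra_simps)
  qed
  show ?thesis
  proof (cases "sa = sc")
    case True
    then have "b = (l b / l a) *\<^sub>R a + 0 *\<^sub>R c"
      using sab pos h by (intro comb) simp_all
    then show ?thesis using pos unfolding in_cone_def by (metis order.refl less_imp_le zero_le_divide_iff)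
  next
    case False
    define \<theta> where "\<theta> = (sc - sb) / (sc - sa)"
    have "0 \<le> \<theta>" "\<theta> \<le> 1" using False sab by (simp_all add: \<theta>_def divide_simps)
    have mix: "\<theta> * sa + (1 - \<theta>) * sc = sb"
      using False sab by (simp add: \<theta>_def divide_simps) (simp add: algebra_simps)
    have "b = (l b * \<theta> / l a) *\<^sub>R a + (l b * (1 - \<theta>) / l c) *\<^sub>R c"
    proof (rule comb)
      show "l b = l b * \<theta> / l a * l a + l b * (1 - \<theta>) / l c * l c"
        using pos by (simp add: field_simps)
      have "l b * \<theta> / l a * h a + l b * (1 - \<theta>) / l c * h c = l b * (\<theta> * sa + (1 - \<theta>) * sc)"
        using pos h by (simp add: field_simps)
      then show "h b = l b * \<theta> / l a * h a + l b * (1 - \<theta>) / l c * h c"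
        using mix h by simp
    qed
    moreover have "0 \<le> l b * \<theta> / l a" "0 \<le> l b * (1 - \<theta>) / l c"
      using pos \<open>0 \<le> \<theta>\<close> \<open>\<theta> \<le> 1\<close> by simp_all
    ultimately show ?thesis unfolding in_cone_def by blast
  qed
qed

definition angularly_sorted :: "(nat \<Rightarrow> 'a::real_vector) \<Rightarrow> nat \<Rightarrow> bool" where
  "angularly_sorted v n \<longleftrightarrow> (\<forall>i j q. i \<le> j \<longrightarrow> j \<le> q \<longrightarrow> q < n \<longrightarrow> in_cone (v j) (v i) (v q))"

lemma separating_functional_pair:
  fixes T :: "'a::real_vector \<Rightarrow> real \<times> real"
  assumes "linear T" "inj T" "finite S" "S \<noteq> {}" "x0 \<notin> convex hull S"
  obtains l h :: "'a \<Rightarrow> real"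
  where "linear l" "linear h" "\<And>x. x \<in> S \<Longrightarrow> 0 < l (x - x0)" "\<And>x. l x = 0 \<Longrightarrow> h x = 0 \<Longrightarrow> x = 0"
proof -
  have "T x0 \<notin> T ` (convex hull S)" using assms(2,5) by (auto dest: injD)
  then have "T x0 \<notin> convex hull (T ` S)" by (simp add: convex_hull_linear_image[OF assms(1)])
  moreover have "closed (convex hull (T ` S))"
    using assms(3) by (simp add: compact_imp_closed finite_imp_compact_convex_hull)
  ultimately obtain a b where ab: "inner a (T x0) < b" "\<forall>y\<in>convex hull (T ` S). b < inner a y"
    using separating_hyperplane_closed_point[OF convex_convex_hull] by blast
  obtain a1 a2 where a: "a = (a1, a2)" by fastforce
  define l where "l x = inner a (T x)" for x
  define h where "h x = a1 * snd (T x) - a2 * fst (T x)" for x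
  have "linear l" "linear h"
    using assms(1) unfolding l_def h_def linear_iff by (simp_all add: inner_add_right algebra_simps)
  moreover have "0 < l (x - x0)" if "x \<in> S" for x
  proof -
    have "b < l x" using ab(2) hull_subset[of "T ` S" convex] that by (auto simp: l_def)
    moreover have "l (x - x0) = l x - l x0" using \<open>linear l\<close> by (rule linear_diff)
    ultimately show ?thesis using ab(1) by (simp add: l_def)
  qed
  moreover have "x = 0" if "l x = 0" "h x = 0" for x
  proof -
    have "a \<noteq> 0" using ab assms(4) hull_subset[of "T ` S" convex] by fastforce
    then have "0 < a1 * a1 + a2 * a2" using a by (simp add: sum_squares_gt_zero_iff zero_prod_def)
    moreover have "(a1 * a1 + a2 * a2) * fst (T x) = a1 * l x - a2 * h x"
      "(a1 * a1 + a2 * a2) * snd (T x) = a2 * l x + a1 * h x"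
      by (simp_all add: l_def h_def a inner_prod_def algebra_simps)
    ultimately have "T x = 0" using that by (auto simp: prod_eq_iff)
    then show ?thesis using injD[OF assms(2), of x 0] linear_0[OF assms(1)] by simp
  qed
  ultimately show thesis by (rule that)
qed

lemma angular_enumeration:
  fixes x0 :: "'a::real_normed_vector"
  assumes plane: "minkowski_plane TYPE('a)" and "finite S" "x0 \<notin> convex hull S"
  obtains a where "bij_betw a {..<card S} S" "angularly_sorted (\<lambda>i. a i - x0) (card S)"
proof (cases "S = {}")
  case True
  then show thesis using that[of "\<lambda>_. x0"] by (simp add: angularly_sorted_def bij_betw_def)
next
  case False
  then obtain s where "s \<in> S" by blast
  then have "s - x0 \<noteq> 0" using assms(3) hull_subset[of S convex] by auto
  obtain w and \<xi> \<eta> :: "'a \<Rightarrow> real"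
    where coord: "linear \<xi>" "linear \<eta>" "\<And>x. x = \<xi> x *\<^sub>R (s - x0) + \<eta> x *\<^sub>R w"
    using minkowski_plane_coordinates[OF plane \<open>s - x0 \<noteq> 0\<close>] by metis
  define T where "T x = (\<xi> x, \<eta> x)" for x
  have "linear T" using coord(1,2) unfolding T_def linear_iff by (simp add: linear_add linear_scale)
  moreover have "inj T" by (rule injI) (metis T_def coord(3) prod.inject)
  ultimately obtain l h :: "'a \<Rightarrow> real" where lh: "linear l" "linear h"
    "\<And>x. x \<in> S \<Longrightarrow> 0 < l (x - x0)" "\<And>x. l x = 0 \<Longrightarrow> h x = 0 \<Longrightarrow> x = 0"
    using separating_functional_pair[OF _ _ assms(2) False assms(3)] by metis
  define slope where "slope x = h (x - x0) / l (x - x0)" for x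
  obtain xs where "distinct xs" "set xs = S" using finite_distinct_list[OF assms(2)] by blast
  define zs where "zs = sort_key slope xs"
  have zs: "distinct zs" "set zs = S" "length zs = card S" "sorted (map slope zs)"
    using \<open>distinct xs\<close> \<open>set xs = S\<close> distinct_card[of zs] by (simp_all add: zs_def)
  have "bij_betw ((!) zs) {..<card S} S" by (rule bij_betw_nth) (simp_all add: zs)
  moreover have "angularly_sorted (\<lambda>i. zs ! i - x0) (card S)"
    unfolding angularly_sorted_def
  proof (intro allI impI)
    fix i j q assume "i \<le> j" "j \<le> q" "q < card S"
    then have "zs ! i \<in> S" "zs ! j \<in> S" "zs ! q \<in> S" using zs(2,3) nth_mem by fastforce+
    moreover have "slope (zs ! i) \<le> slope (zs ! j)" "slope (zs ! j) \<le> slope (zs ! q)"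
      using sorted_nth_mono[OF zs(4)] \<open>i \<le> j\<close> \<open>j \<le> q\<close> \<open>q < card S\<close> zs(3) by simp_all
    ultimately show "in_cone (zs ! j - x0) (zs ! i - x0) (zs ! q - x0)"
      using lh(3) by (intro in_cone_of_slope_order[OF lh(1,2,4)]) (simp_all add: slope_def)
  qed
  ultimately show thesis by (rule that)
qed

lemma extreme_point_notin_convex_hull_delete:
  assumes "x extreme_point_of (convex hull A)"
  shows "x \<notin> convex hull (A - {x})"
proof -
  have "convex (convex hull A - {x})"
    using assms extreme_point_of_stillconvex[OF convex_convex_hull] by blast
  moreover have "A - {x} \<subseteq> convex hull A - {x}" using hull_subset[of A convex] by blast
  ultimately have "convex hull (A - {x}) \<subseteq> convex hull A - {x}" by (rule hull_minimal[rotated])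
  then show ?thesis by blast
qed

section \<open>Pairs around a Fermat-Torricelli point\<close>

lemma norm_shift_in_cone_le:
  assumes "d = \<alpha> *\<^sub>R v + \<beta> *\<^sub>R w" "0 \<le> \<beta>" "0 \<le> t" "t * \<alpha> \<le> 1"
  shows "norm (t *\<^sub>R d - v) \<le> (1 - t * \<alpha>) * norm v + t * \<beta> * norm w"
proof -
  have "t *\<^sub>R d - v = (1 - t * \<alpha>) *\<^sub>R (- v) + (t * \<beta>) *\<^sub>R w"
    using assms(1) by (simp add: algebra_simps)
  then have "norm (t *\<^sub>R d - v) \<le> norm ((1 - t * \<alpha>) *\<^sub>R (- v)) + norm ((t * \<beta>) *\<^sub>R w)"
    by (metis norm_triangle_ineq)
  also have "\<dots> = (1 - t * \<alpha>) * norm v + t * \<beta> * norm w"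
    using assms(2-4) by simp
  finally show ?thesis .
qed

lemma norm_shift_in_cone_sum_le:
  assumes "d = \<alpha> *\<^sub>R v + \<beta> *\<^sub>R w" "0 \<le> \<alpha>" "0 \<le> \<beta>" "0 \<le> t" "t * \<alpha> \<le> 1" "t * \<beta> \<le> 1"
  shows "norm (t *\<^sub>R d - v) + norm (t *\<^sub>R d - w) \<le> norm v + norm w"
  using norm_shift_in_cone_le[OF assms(1,3,4,5)] norm_shift_in_cone_le[of d \<beta> w \<alpha> v t] assms
  by (simp add: algebra_simps)

lemma antinorming_functional_of_shift_eq:
  assumes plane: "minkowski_plane TYPE('a::real_normed_vector)"
    and d: "d = \<alpha> *\<^sub>R v + \<beta> *\<^sub>R w" "0 \<le> \<alpha>" "0 \<le> \<beta>" "d \<noteq> 0"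
    and t: "0 < t" "t * \<alpha> < 1" "t * \<beta> < 1"
    and eq: "norm v + norm w \<le> norm (t *\<^sub>R d - v) + norm (t *\<^sub>R d - (w::'a))"
  obtains \<psi> where "norm_dominated \<psi>" "\<psi> v = norm v" "\<psi> w = - norm w"
proof -
  have "norm (t *\<^sub>R d - v) \<le> (1 - t * \<alpha>) * norm v + t * \<beta> * norm w"
    and "norm (t *\<^sub>R d - w) \<le> (1 - t * \<beta>) * norm w + t * \<alpha> * norm v"
    using norm_shift_in_cone_le[OF d(1)] norm_shift_in_cone_le[of d \<beta> w \<alpha> v t] d t
    by (simp_all add: add.commute)
  then have eq_v: "norm (t *\<^sub>R d - v) = (1 - t * \<alpha>) * norm v + t * \<beta> * norm w"
    and eq_w: "norm (t *\<^sub>R d - w) = t * \<alpha> * norm v + (1 - t * \<beta>) * norm w"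
    using eq by (simp_all add: algebra_simps)
  show thesis
  proof (cases "\<alpha> = 0")
    case True
    then have "0 < t * \<beta>" using d t by (auto simp: zero_less_mult_iff)
    have "(1 - t * \<alpha>) *\<^sub>R v - (t * \<beta>) *\<^sub>R w = - (t *\<^sub>R d - v)"
      using d(1) by (simp add: algebra_simps)
    then have "norm ((1 - t * \<alpha>) *\<^sub>R v - (t * \<beta>) *\<^sub>R w) = (1 - t * \<alpha>) * norm v + t * \<beta> * norm w"
      using eq_v by (metis norm_minus_cancel)
    from antinorming_functional_of_norm_diff_eq[OF plane _ _ this that] show thesis
      using t \<open>0 < t * \<beta>\<close> by simp
  next
    case False
    then have "0 < t * \<alpha>" using d t by simp
    have "t *\<^sub>R d - w = (t * \<alpha>) *\<^sub>R v - (1 - t * \<beta>) *\<^sub>R w"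
      using d(1) by (simp add: algebra_simps)
    then have "norm ((t * \<alpha>) *\<^sub>R v - (1 - t * \<beta>) *\<^sub>R w) = t * \<alpha> * norm v + (1 - t * \<beta>) * norm w"
      using eq_w by simp
    from antinorming_functional_of_norm_diff_eq[OF plane _ _ this that] show thesis
      using t \<open>0 < t * \<alpha>\<close> by simp
  qed
qed

lemma sum_pair_partition:
  assumes "finite I" "card (f ` I \<union> g ` I) = 2 * card I"
  shows "\<And>i. i \<in> I \<Longrightarrow> f i \<noteq> g i"
    and "sum h (f ` I \<union> g ` I) = (\<Sum>i\<in>I. h (f i) + h (g i))"
proof -
  have "card (f ` I) + card (g ` I) = card (f ` I \<union> g ` I) + card (f ` I \<inter> g ` I)"
    using assms(1) by (intro card_Un_Int) auto
  moreover have "card (f ` I) \<le> card I" "card (g ` I) \<le> card I"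
    using assms(1) by (simp_all add: card_image_le)
  ultimately have "card (f ` I) = card I" "card (g ` I) = card I" "card (f ` I \<inter> g ` I) = 0"
    using assms(2) by linarith+
  then have inj: "inj_on f I" "inj_on g I" and disj: "f ` I \<inter> g ` I = {}"
    using assms(1) by (simp_all add: eq_card_imp_inj_on)
  then show "\<And>i. i \<in> I \<Longrightarrow> f i \<noteq> g i" by blast
  have "sum h (f ` I \<union> g ` I) = sum h (f ` I) + sum h (g ` I)"
    using assms(1) disj by (simp add: sum.union_disjoint)
  also have "\<dots> = (\<Sum>i\<in>I. h (f i) + h (g i))"
    using inj by (simp add: sum.reindex sum.distrib)
  finally show "sum h (f ` I \<union> g ` I) = (\<Sum>i\<in>I. h (f i) + h (g i))" .
qed

lemma bij_betw_symmetric_pairs: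
  assumes "bij_betw a {..<2 * m + 1} S"
  shows "S = insert (a m) (a ` {..<m} \<union> (\<lambda>r. a (2 * m - r)) ` {..<m})"
    and "a m \<notin> a ` {..<m} \<union> (\<lambda>r. a (2 * m - r)) ` {..<m}"
    and "card (a ` {..<m} \<union> (\<lambda>r. a (2 * m - r)) ` {..<m}) = 2 * m"
proof -
  define J where "J = {..<m} \<union> (\<lambda>r. 2 * m - r) ` {..<m}"
  have "x \<in> J" if "x < 2 * m + 1" "x \<noteq> m" for x
  proof (cases "x < m")
    case False
    then have "x \<in> (\<lambda>r. 2 * m - r) ` {..<m}"
      using that by (intro image_eqI[of _ _ "2 * m - x"]) auto
    then show ?thesis by (simp add: J_def)
  qed (simp add: J_def)
  then have "{..<2 * m + 1} = insert m J" by (auto simp: J_def)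
  moreover have "m \<notin> J" by (auto simp: J_def)
  moreover have C: "a ` J = a ` {..<m} \<union> (\<lambda>r. a (2 * m - r)) ` {..<m}"
    by (simp add: J_def image_Un image_image)
  ultimately have "S = insert (a m) (a ` J)" "a m \<notin> a ` J" "card S = card (a ` J) + 1"
    using assms bij_betw_same_card[OF assms]
    by (auto simp: bij_betw_def inj_on_image_mem_iff finite_subset)
  then show "S = insert (a m) (a ` {..<m} \<union> (\<lambda>r. a (2 * m - r)) ` {..<m})"
    and "a m \<notin> a ` {..<m} \<union> (\<lambda>r. a (2 * m - r)) ` {..<m}"
    and "card (a ` {..<m} \<union> (\<lambda>r. a (2 * m - r)) ` {..<m}) = 2 * m"
    using bij_betw_same_card[OF assms] by (simp_all add: C)
qed

text \<open>Moving c to c + t (p - c) keeps its distance sum to {c, p} and, for small t, does not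
  increase any pair sum; minimality of c therefore forces equality in each pair.\<close>

lemma FT_point_antinorms_pairs:
  fixes c p :: "'a::real_normed_vector"
  assumes plane: "minkowski_plane TYPE('a)"
    and FT: "c \<in> FT (insert c (insert p C))" and "c \<notin> insert p C" "p \<notin> C"
    and C: "C = xs ` {..<m} \<union> ys ` {..<m}" "card C = 2 * m"
    and cone: "\<And>r. r < m \<Longrightarrow> in_cone (p - c) (xs r - c) (ys r - c)"
    and "r < m"
  shows "\<exists>\<psi>. norm_dominated \<psi> \<and> \<psi> (xs r - c) = norm (xs r - c) \<and> \<psi> (ys r - c) = - norm (ys r - c)"
proof -
  define d where "d = p - c"
  obtain \<alpha> \<beta> where \<alpha>\<beta>: "\<And>r. r < m \<Longrightarrow> 0 \<le> \<alpha> r \<and> 0 \<le> \<beta> r \<and> d = \<alpha> r *\<^sub>R (xs r - c) + \<beta> r *\<^sub>R (ys r - c)"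
    using cone unfolding in_cone_def d_def by metis
  define \<sigma> where "\<sigma> = (\<Sum>r<m. \<alpha> r + \<beta> r)"
  define t where "t = 1 / (1 + \<sigma>)"
  have "0 \<le> \<sigma>" unfolding \<sigma>_def using \<alpha>\<beta> by (intro sum_nonneg) (simp add: add_nonneg_nonneg)
  then have t: "0 < t" "t \<le> 1" by (simp_all add: t_def)
  have small: "t * \<alpha> r < 1 \<and> t * \<beta> r < 1" if "r < m" for r
  proof -
    have "\<alpha> r + \<beta> r \<le> \<sigma>"
      unfolding \<sigma>_def using that \<alpha>\<beta> by (intro member_le_sum) (simp_all add: add_nonneg_nonneg)
    then have "t * (\<alpha> r + \<beta> r) < 1"
      using \<open>0 \<le> \<sigma>\<close> by (simp add: t_def divide_simps)
    moreover have "0 \<le> t * \<alpha> r" "0 \<le> t * \<beta> r" using \<alpha>\<beta>[OF that] t by simp_all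
    ultimately show ?thesis by (simp add: distrib_left)
  qed
  define pair_sum where "pair_sum y r = norm (y - xs r) + norm (y - ys r)" for y r
  define z where "z = c + t *\<^sub>R d"
  have at_c: "pair_sum c r = norm (xs r - c) + norm (ys r - c)" for r
    by (simp add: pair_sum_def norm_minus_commute)
  have at_z: "pair_sum z r = norm (t *\<^sub>R d - (xs r - c)) + norm (t *\<^sub>R d - (ys r - c))" for r
    by (simp add: pair_sum_def z_def algebra_simps)
  have "finite C" using C(2) \<open>r < m\<close> by (intro card_ge_0_finite) simp
  have total: "(\<Sum>x\<in>insert c (insert p C). norm (y - x)) = norm (y - c) + norm (y - p) + (\<Sum>r<m. pair_sum y r)"
    for y
    using \<open>finite C\<close> assms(3,4) sum_pair_partition(2)[of "{..<m}" xs ys] C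
    by (simp add: pair_sum_def)
  have "norm (z - c) + norm (z - p) = norm (c - c) + norm (c - p)"
  proof -
    have "z - p = - ((1 - t) *\<^sub>R d)" by (simp add: z_def d_def algebra_simps)
    then have "norm (z - p) = (1 - t) * norm d" using t by simp
    moreover have "norm (z - c) = t * norm d" using t by (simp add: z_def)
    moreover have "norm (c - p) = norm d" by (simp add: d_def norm_minus_commute)
    ultimately show ?thesis by (simp add: algebra_simps)
  qed
  with FT have "(\<Sum>r<m. pair_sum c r) \<le> (\<Sum>r<m. pair_sum z r)"
    unfolding FT_def total by (metis (no_types, lifting) add_le_cancel_left mem_Collect_eq)
  moreover have le: "pair_sum z r \<le> pair_sum c r" if "r \<in> {..<m}" for r
    unfolding at_c at_z using \<alpha>\<beta> small t that
    by (intro norm_shift_in_cone_sum_le) (auto simp: less_imp_le)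
  ultimately have "(\<Sum>r<m. pair_sum z r) = (\<Sum>r<m. pair_sum c r)"
    using sum_mono[of "{..<m}" "pair_sum z" "pair_sum c"] by simp
  from sum_mono_inv[OF this le] \<open>r < m\<close> have "pair_sum z r = pair_sum c r" by simp
  then have ineq: "norm (xs r - c) + norm (ys r - c) \<le> norm (t *\<^sub>R d - (xs r - c)) + norm (t *\<^sub>R d - (ys r - c))"
    by (simp add: at_c at_z)
  have "d \<noteq> 0" using assms(3) by (auto simp: d_def)
  obtain \<psi> where "norm_dominated \<psi>" "\<psi> (xs r - c) = norm (xs r - c)" "\<psi> (ys r - c) = - norm (ys r - c)"
    using antinorming_functional_of_shift_eq[OF plane, of d "\<alpha> r" "xs r - c" "\<beta> r" "ys r - c" t]
      \<alpha>\<beta>[OF \<open>r < m\<close>] small[OF \<open>r < m\<close>] \<open>d \<noteq> 0\<close> t(1) ineq by blast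
  then show ?thesis by blast
qed

text \<open>Each pair functional norms v 0 and antinorms v (2m), the extreme vectors of the angle,
  and two linear functionals agreeing on these agree on the whole angle.\<close>

lemma common_antinorming_functional:
  fixes v :: "nat \<Rightarrow> 'a::real_normed_vector"
  assumes plane: "minkowski_plane TYPE('a)"
    and sorted: "angularly_sorted v (2 * m + 1)" and nz: "\<And>i. i \<le> 2 * m \<Longrightarrow> v i \<noteq> 0"
    and pairs: "\<And>r. r < m \<Longrightarrow> \<exists>\<psi>. norm_dominated \<psi> \<and> \<psi> (v r) = norm (v r) \<and> \<psi> (v (2 * m - r)) = - norm (v (2 * m - r))"
  obtains \<psi> where "norm_dominated \<psi>" "\<psi> (v 0) = norm (v 0)"
    "\<And>r. r < m \<Longrightarrow> \<psi> (v r) = norm (v r) \<and> \<psi> (v (2 * m - r)) = - norm (v (2 * m - r))"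
proof (cases "m = 0")
  case True
  then show thesis using minkowski_plane_norming_functional[OF plane] that by blast
next
  case False
  have cone: "in_cone (v j) (v i) (v q)" if "i \<le> j" "j \<le> q" "q \<le> 2 * m" for i j q
    using sorted that unfolding angularly_sorted_def by simp
  have ends: "\<psi> (v 0) = norm (v 0) \<and> \<psi> (v (2 * m)) = - norm (v (2 * m))"
    if "norm_dominated \<psi>" "\<psi> (v r) = norm (v r)" "\<psi> (v (2 * m - r)) = - norm (v (2 * m - r))" "r < m"
    for \<psi> r
    using norming_of_in_cone_left[OF that(1,2,3) cone[of 0 r "2 * m - r"]]
      antinorming_of_in_cone_right[OF that(1,2,3) cone[of r "2 * m - r" "2 * m"]] nz that(4)
    by simp
  obtain \<psi> where \<psi>: "norm_dominated \<psi>" "\<psi> (v 0) = norm (v 0)" "\<psi> (v (2 * m)) = - norm (v (2 * m))"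
    using pairs[of 0] ends False by blast
  have "\<psi> (v r) = norm (v r) \<and> \<psi> (v (2 * m - r)) = - norm (v (2 * m - r))" if r: "r < m" for r
  proof -
    obtain \<phi> where \<phi>: "norm_dominated \<phi>" "\<phi> (v r) = norm (v r)" "\<phi> (v (2 * m - r)) = - norm (v (2 * m - r))"
      using pairs[OF r] by blast
    have "\<psi> (v i) = \<phi> (v i)" if i: "i \<le> 2 * m" for i
    proof -
      obtain \<alpha> \<beta> where "v i = \<alpha> *\<^sub>R v 0 + \<beta> *\<^sub>R v (2 * m)"
        using cone[of 0 i "2 * m"] i unfolding in_cone_def by auto
      then show ?thesis
        using \<psi> \<phi> ends[OF \<phi> r] by (simp add: norm_dominated_def linear_add linear_scale)
    qed
    from this[of r] this[of "2 * m - r"] show ?thesis using \<phi> r by simp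
  qed
  then show thesis using that \<psi>(1,2) by blast
qed

lemma double_cluster_of_antinormed_pairs:
  assumes \<psi>: "norm_dominated \<psi>" "\<psi> u = norm u" "u \<noteq> 0"
    and C: "C = xs ` {..<m} \<union> ys ` {..<m}" "card C = 2 * m"
    and pairs: "\<And>r. r < m \<Longrightarrow> \<psi> (xs r - c) = norm (xs r - c) \<and> \<psi> (ys r - c) = - norm (ys r - c)"
  shows "double_cluster C" and "c \<in> FT C"
proof -
  have split: "sum h C = (\<Sum>r<m. h (xs r) + h (ys r))" for h :: "'a \<Rightarrow> real"
    using sum_pair_partition(2)[of "{..<m}" xs ys h] C by simp
  have antinormed: "\<psi> (xs r - ys r) = norm (xs r - ys r)"
    "norm (xs r - ys r) = norm (xs r - c) + norm (ys r - c)" if "r < m" for r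
    using antinormed_pair_norm_diff[OF \<psi>(1)] pairs[OF that] by blast+
  have unit: "(1 / norm (xs r - ys r)) *\<^sub>R (xs r - ys r) \<in> cball 0 1 \<inter> {x. \<psi> x = 1}"
    if "r < m" for r
  proof -
    have "xs r \<noteq> ys r" using sum_pair_partition(1)[of "{..<m}" xs ys r] C that by simp
    then show ?thesis using antinormed(1)[OF that] \<psi>(1) by (simp add: norm_dominated_def linear_scale)
  qed
  show "double_cluster C"
    unfolding double_cluster_def
    using C proper_exposed_face_of_norming[OF \<psi>] unit by blast
  have "(\<Sum>x\<in>C. norm (c - x)) \<le> (\<Sum>x\<in>C. norm (z - x))" for z
    unfolding split
  proof (rule sum_mono)
    fix r assume "r \<in> {..<m}"
    then have "norm (c - xs r) + norm (c - ys r) = norm ((z - ys r) - (z - xs r))"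
      using antinormed(2)[of r] by (simp add: norm_minus_commute)
    also have "\<dots> \<le> norm (z - xs r) + norm (z - ys r)"
      using norm_triangle_ineq4[of "z - ys r" "z - xs r"] by (simp only: add.commute)
    finally show "norm (c - xs r) + norm (c - ys r) \<le> norm (z - xs r) + norm (z - ys r)" .
  qed
  then show "c \<in> FT C" by (simp add: FT_def)
qed

theorem theorem4p6:
  fixes A :: "'a::real_normed_vector set" and x0 :: 'a and k :: nat
  assumes "minkowski_plane TYPE('a)"
    and "finite A" and "card A = 2 * k"
    and "x0 \<in> A"
    and "x0 \<in> FT A"
    and "x0 extreme_point_of (convex hull A)"
  shows "pseudo_double_cluster_centre A x0"
proof -
  define S where "S = A - {x0}"
  obtain m where "k = Suc m" using assms(2-4) by (cases k) auto
  then have S: "A = insert x0 S" "x0 \<notin> S" "finite S" "card S = 2 * m + 1"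
    using assms(2-4) by (auto simp: S_def)
  have "x0 \<notin> convex hull S"
    using extreme_point_notin_convex_hull_delete[OF assms(6)] by (simp add: S_def)
  then obtain a where bij: "bij_betw a {..<2 * m + 1} S"
    and sorted: "angularly_sorted (\<lambda>i. a i - x0) (2 * m + 1)"
    using angular_enumeration[OF assms(1) S(3)] S(4) by metis
  define C where "C = a ` {..<m} \<union> (\<lambda>r. a (2 * m - r)) ` {..<m}"
  note C = bij_betw_symmetric_pairs[OF bij, folded C_def]
  have nz: "a i - x0 \<noteq> 0" if "i \<le> 2 * m" for i
    using bij_betwE[OF bij] that S(2) by fastforce
  have cone: "in_cone (a m - x0) (a r - x0) (a (2 * m - r) - x0)" if "r < m" for r
    using sorted that unfolding angularly_sorted_def by simp
  have "x0 \<in> FT (insert x0 (insert (a m) C))" using assms(5) S(1) C(1) by simp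
  then have "\<exists>\<psi>. norm_dominated \<psi> \<and> \<psi> (a r - x0) = norm (a r - x0)
      \<and> \<psi> (a (2 * m - r) - x0) = - norm (a (2 * m - r) - x0)" if "r < m" for r
    using FT_point_antinorms_pairs[OF assms(1) _ _ C(2) C_def C(3) cone that] S(2) C(1) by blast
  then obtain \<psi> where \<psi>: "norm_dominated \<psi>" "\<psi> (a 0 - x0) = norm (a 0 - x0)"
    "\<And>r. r < m \<Longrightarrow> \<psi> (a r - x0) = norm (a r - x0) \<and> \<psi> (a (2 * m - r) - x0) = - norm (a (2 * m - r) - x0)"
    using common_antinorming_functional[OF assms(1) sorted nz] by blast
  have "double_cluster C" "x0 \<in> FT C"
    using double_cluster_of_antinormed_pairs[OF \<psi>(1,2) nz[of 0] C_def C(3) \<psi>(3)] by simp_all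
  moreover have "A = C \<union> {x0} \<union> {a m}" using S(1) C(1) by auto
  ultimately show ?thesis unfolding pseudo_double_cluster_centre_def by blast
qed

end
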